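(* Let $\mathcal{G}$ be the real Lie algebra with basis $X_1,X_2,X_3$ and brackets $[X_1,X_2]=0$, $[X_2,X_3]=X_1$, $[X_3,X_1]=X_2$ (Bianchi type $VII_0$). Every real Manin triple $(\mathcal{D},\mathcal{G}',\tilde{\mathcal{G}}')$ with $\mathcal{G}'\cong\mathcal{G}$ is isomorphic to exactly one Manin triple $(\mathcal{D},\mathcal{G},\tilde{\mathcal{G}})$ in which $\tilde{\mathcal{G}}$, in the basis $\tilde X^1,\tilde X^2,\tilde X^3$ dual to $X_1,X_2,X_3$, has one of the following bracket structures: (a) (Bianchi $I$) all brackets zero; (b) (Bianchi $II$) (i) $[\tilde X^1,\tilde X^2]=\tilde X^3$, $[\tilde X^2,\tilde X^3]=0$, $[\tilde X^3,\tilde X^1]=0$; (ii) $[\tilde X^1,\tilde X^2]=-\tilde X^3$, $[\tilde X^2,\tilde X^3]=0$, $[\tilde X^3,\tilde X^1]=0$; (c) (Bianchi $IV$) $[\tilde X^1,\tilde X^2]=b(-\tilde X^2+\tilde X^3)$, $[\tilde X^2,\tilde X^3]=0$, $[\tilde X^3,\tilde X^1]=b\tilde X^3$, $b\in\mathbb{R}\setminus\{0\}$; (d) (Bianchi $V$) (i) $[\tilde X^1,\tilde X^2]=-\tilde X^2$, $[\tilde X^2,\tilde X^3]=0$, $[\tilde X^3,\tilde X^1]=\tilde X^3$; (ii) $[\tilde X^1,\tilde X^2]=0$, $[\tilde X^2,\tilde X^3]=b\tilde X^2$, $[\tilde X^3,\tilde X^1]=-b\tilde X^1$, $b>0$.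
   Context: A real Manin triple $(\mathcal{D},\mathcal{G},\tilde{\mathcal{G}})$ consists of a real Lie algebra $\mathcal{D}$ with a symmetric, ad-invariant, nondegenerate bilinear form $\langle\cdot,\cdot\rangle$, and two maximally isotropic Lie subalgebras $\mathcal{G},\tilde{\mathcal{G}}$ with $\mathcal{D}=\mathcal{G}\oplus\tilde{\mathcal{G}}$ as vector spaces; here $\dim\mathcal{D}=6$, $\dim\mathcal{G}=\dim\tilde{\mathcal{G}}=3$. Bases $X_i$ of $\mathcal{G}$ and $\tilde X^i$ of $\tilde{\mathcal{G}}$ are dual if $\langle X_i,X_j\rangle=0$, $\langle X_i,\tilde X^j\rangle=\delta_i^j$, $\langle\tilde X^i,\tilde X^j\rangle=0$. If $[X_i,X_j]=f_{ij}{}^kX_k$ and $[\tilde X^i,\tilde X^j]=\tilde f^{ij}{}_k\tilde X^k$, ad-invariance forces $[X_i,\tilde X^j]=f_{ki}{}^j\tilde X^k+\tilde f^{jk}{}_iX_k$, so the triple is determined by the brackets of $\mathcal{G}$ and $\tilde{\mathcal{G}}$ in dual bases. Two Manin triples are isomorphic if there is a Lie algebra isomorphism of the doubles preserving the bilinear forms and mapping first subalgebra to first subalgebra and second to second; equivalently, they are related by a change of basis $X_i'=X_kA^k{}_i$, $\tilde X'^j=(A^{-1})^j{}_k\tilde X^k$. Different values of the parameter $b$ give non-isomorphic triples. *)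

theory Defs
  imports "HOL-Analysis.Analysis"
begin

text \<open>Structure constants w.r.t. a basis indexed by the type 3 (labels 1,2,3):
  sc i j k is the coefficient of the k-th basis vector in the bracket of the
  i-th and j-th basis vectors.\<close>
type_synonym sc = "3 \<Rightarrow> 3 \<Rightarrow> 3 \<Rightarrow> real"

definition sc_of :: "real^3 \<Rightarrow> real^3 \<Rightarrow> real^3 \<Rightarrow> sc" where
  "sc_of c12 c23 c31 = (\<lambda>i j k.
     if i = 1 \<and> j = 2 then c12 $ k else if i = 2 \<and> j = 1 then - c12 $ k
     else if i = 2 \<and> j = 3 then c23 $ k else if i = 3 \<and> j = 2 then - c23 $ k
     else if i = 3 \<and> j = 1 then c31 $ k else if i = 1 \<and> j = 3 then - c31 $ k
     else 0)"

definition brG :: "sc \<Rightarrow> real^3 \<Rightarrow> real^3 \<Rightarrow> real^3" where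
  "brG f x y = (\<chi> k. \<Sum>i\<in>UNIV. \<Sum>j\<in>UNIV. x $ i * y $ j * f i j k)"

text \<open>Elements of the double D = G + G~ in coordinates (x, xi) meaning
  x_i X_i + xi_i X~^i, with X_i, X~^i dual bases.  The bracket is
  [X_i,X_j] = f_ij^k X_k, [X~^i,X~^j] = ft^ij_k X~^k,
  [X_i,X~^j] = f_ki^j X~^k + ft^jk_i X_k (and [X~^j,X_i] = -[X_i,X~^j]).\<close>
definition dbr :: "sc \<Rightarrow> sc \<Rightarrow> ((real^3) \<times> (real^3)) \<Rightarrow> ((real^3) \<times> (real^3)) \<Rightarrow> ((real^3) \<times> (real^3))" where
  "dbr f ft u v = (let x = fst u; xi = snd u; y = fst v; eta = snd v in
     ((\<chi> k. (\<Sum>i\<in>UNIV. \<Sum>j\<in>UNIV. x $ i * y $ j * f i j k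
                + x $ i * eta $ j * ft j k i - xi $ i * y $ j * ft i k j)),
      (\<chi> k. (\<Sum>i\<in>UNIV. \<Sum>j\<in>UNIV. xi $ i * eta $ j * ft i j k
                + x $ i * eta $ j * f k i j - xi $ i * y $ j * f k j i))))"

definition dform :: "((real^3) \<times> (real^3)) \<Rightarrow> ((real^3) \<times> (real^3)) \<Rightarrow> real" where
  "dform u v = fst u \<bullet> snd v + snd u \<bullet> fst v"

text \<open>(f, ft) defines a Manin triple: the double with bracket dbr is a Lie algebra
  (alternating, Jacobi; bilinearity is automatic) and the form is ad-invariant
  (symmetry, nondegeneracy, maximal isotropy of both summands are automatic).
  Then G = span X_i and G~ = span X~^i are subalgebras with brackets f, ft.\<close>
definition manin_triple :: "sc \<Rightarrow> sc \<Rightarrow> bool" where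
  "manin_triple f ft \<longleftrightarrow>
     (\<forall>u. dbr f ft u u = 0) \<and>
     (\<forall>u v w. dbr f ft u (dbr f ft v w) + dbr f ft v (dbr f ft w u)
              + dbr f ft w (dbr f ft u v) = 0) \<and>
     (\<forall>u v w. dform (dbr f ft u v) w = dform u (dbr f ft v w))"

definition Gpart :: "((real^3) \<times> (real^3)) set" where
  "Gpart = {(x, 0) | x. True}"

definition Gtpart :: "((real^3) \<times> (real^3)) set" where
  "Gtpart = {(0, xi) | xi. True}"

definition manin_iso :: "sc \<Rightarrow> sc \<Rightarrow> sc \<Rightarrow> sc \<Rightarrow> bool" where
  "manin_iso f1 ft1 f2 ft2 \<longleftrightarrow>
     (\<exists>\<Phi> :: ((real^3) \<times> (real^3)) \<Rightarrow> ((real^3) \<times> (real^3)).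
        linear \<Phi> \<and> bij \<Phi> \<and>
        (\<forall>u v. \<Phi> (dbr f1 ft1 u v) = dbr f2 ft2 (\<Phi> u) (\<Phi> v)) \<and>
        (\<forall>u v. dform (\<Phi> u) (\<Phi> v) = dform u v) \<and>
        \<Phi> ` Gpart = Gpart \<and> \<Phi> ` Gtpart = Gtpart)"

definition lie_iso :: "sc \<Rightarrow> sc \<Rightarrow> bool" where
  "lie_iso f1 f2 \<longleftrightarrow>
     (\<exists>\<phi> :: real^3 \<Rightarrow> real^3. linear \<phi> \<and> bij \<phi> \<and>
        (\<forall>x y. \<phi> (brG f1 x y) = brG f2 (\<phi> x) (\<phi> y)))"

definition f_VII0 :: sc where
  "f_VII0 = sc_of (vector [0, 0, 0]) (vector [1, 0, 0]) (vector [0, 1, 0])"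

datatype dual_label = BI | BII_i | BII_ii | BIV | BV_i | BV_ii

text \<open>Admissible parameter values; b is irrelevant (fixed to 0) except for IV and V(ii).\<close>
fun valid_param :: "dual_label \<Rightarrow> real \<Rightarrow> bool" where
  "valid_param BIV b = (b \<noteq> 0)"
| "valid_param BV_ii b = (b > 0)"
| "valid_param _ b = (b = 0)"

text \<open>Structure constants of G~ in the dual basis:
  arguments of sc_of are [X~1,X~2], [X~2,X~3], [X~3,X~1].\<close>
fun dual_sc :: "dual_label \<Rightarrow> real \<Rightarrow> sc" where
  "dual_sc BI b = sc_of 0 0 0"
| "dual_sc BII_i b = sc_of (vector [0, 0, 1]) 0 0"
| "dual_sc BII_ii b = sc_of (vector [0, 0, -1]) 0 0"
| "dual_sc BIV b = sc_of (vector [0, -b, b]) 0 (vector [0, 0, b])"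
| "dual_sc BV_i b = sc_of (vector [0, -1, 0]) 0 (vector [0, 0, 1])"
| "dual_sc BV_ii b = sc_of 0 (vector [0, b, 0]) (vector [-b, 0, 0])"

end

theory Submission
  imports Defs
begin

text \<open>
  An isomorphism of Manin triples preserving both halves is the same as a pair \<open>(C, D)\<close> of Lie
  algebra isomorphisms of the halves with \<open>D\<close> contragredient to \<open>C\<close>, i.e.
  \<open>C x \<bullet> D y = x \<bullet> y\<close>. So one may assume \<open>G = VII\<^sub>0\<close>, and then the Jacobi identity of the
  double forces the dual structure constants into the family \<open>dual_VII0 p q r s\<close> with \<open>p s = 0\<close>.
  The automorphisms of \<open>VII\<^sub>0\<close> are the rotation-dilations \<open>(a, b)\<close> of \<open>span {X\<^sub>1, X\<^sub>2}\<close>,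
  possibly composed with a reflection (\<open>\<sigma> = -1\<close>), together with shifts \<open>(u, v)\<close> of \<open>X\<^sub>3\<close> into
  that plane. Their contragredients act by \<open>p \<mapsto> \<sigma> p\<close>, \<open>s \<mapsto> (a\<^sup>2 + b\<^sup>2) s\<close>, and move
  \<open>(r, q)\<close> by a rotation-dilation of the same modulus plus \<open>p (u, -v)\<close>. If \<open>p \<noteq> 0\<close> then
  \<open>s = 0\<close>, the shifts kill \<open>q\<close> and \<open>r\<close>, and \<open>\<sigma>\<close> makes \<open>p\<close> positive: type V(ii) with
  \<open>b = |p|\<close>. If \<open>p = 0\<close>, the orbit is determined by the sign of \<open>s\<close> when \<open>q = r = 0\<close>
  (types I, II(i), II(ii)), and otherwise by whether \<open>s = 0\<close> (type V(i)) or by the invariant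
  \<open>(q\<^sup>2 + r\<^sup>2) / s\<close> (type IV).
\<close>

section \<open>Brackets given by structure constants\<close>

lemma inner_fst_dbr:
  "fst (dbr f g (x, xi) (y, eta)) \<bullet> z = brG f x y \<bullet> z + x \<bullet> brG g eta z - y \<bullet> brG g xi z"
  by (simp add: dbr_def brG_def inner_vec_def sum_3 algebra_simps)

lemma inner_snd_dbr:
  "snd (dbr f g (x, xi) (y, eta)) \<bullet> z = brG g xi eta \<bullet> z + eta \<bullet> brG f z x - xi \<bullet> brG f z y"
  by (simp add: dbr_def brG_def inner_vec_def sum_3 algebra_simps)

lemma dbr_Gpart: "dbr f g (x, 0) (y, 0) = (brG f x y, 0)"
  by (simp add: dbr_def brG_def vec_eq_iff)

lemma dbr_Gtpart: "dbr f g (0, xi) (0, eta) = (0, brG g xi eta)"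
  by (simp add: dbr_def brG_def vec_eq_iff)

lemma brG_axis: "brG f (axis i 1) (axis j 1) = (\<chi> k. f i j k)"
  using exhaust_3[of i] exhaust_3[of j] by (auto simp: brG_def axis_def vec_eq_iff sum_3)

lemma bilinear_brG: "bilinear (brG f)"
  by (simp add: bilinear_def linear_iff brG_def vec_eq_iff sum_3 algebra_simps)

lemma brG_eqI:
  assumes "bilinear B" and "\<And>i j k. f i j k = B (axis i 1) (axis j 1) $ k"
  shows "brG f = B"
proof (rule bilinear_eq_stdbasis[OF bilinear_brG assms(1)])
  fix u v :: "real^3" assume "u \<in> Basis" "v \<in> Basis"
  then obtain i j where "u = axis i 1" "v = axis j 1" by (auto simp: Basis_vec_def)
  then show "brG f u v = B u v" using assms(2) by (simp add: brG_axis)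
qed

lemma brG_inject: "brG f = brG f' \<Longrightarrow> f = f'"
  by (metis brG_axis vec_lambda_inverse UNIV_I ext)

lemma linear_expansion_3:
  fixes C :: "real^3 \<Rightarrow> 'a::real_vector"
  assumes "linear C"
  shows "C x = x$1 *\<^sub>R C (axis 1 1) + x$2 *\<^sub>R C (axis 2 1) + x$3 *\<^sub>R C (axis 3 1)"
proof -
  have "x = x$1 *\<^sub>R axis 1 1 + x$2 *\<^sub>R axis 2 1 + x$3 *\<^sub>R axis 3 1"
    by (simp add: vec_eq_iff forall_3 axis_def)
  then have "C x = C (x$1 *\<^sub>R axis 1 1 + x$2 *\<^sub>R axis 2 1 + x$3 *\<^sub>R axis 3 1)"
    by (rule arg_cong)
  also have "\<dots> = x$1 *\<^sub>R C (axis 1 1) + x$2 *\<^sub>R C (axis 2 1) + x$3 *\<^sub>R C (axis 3 1)"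
    by (simp add: linear_add[OF assms] linear_scale[OF assms])
  finally show ?thesis .
qed

definition lie_hom :: "sc \<Rightarrow> sc \<Rightarrow> (real^3 \<Rightarrow> real^3) \<Rightarrow> bool" where
  "lie_hom f f' \<phi> \<longleftrightarrow> linear \<phi> \<and> (\<forall>x y. \<phi> (brG f x y) = brG f' (\<phi> x) (\<phi> y))"

lemma lie_iso_iff_lie_hom: "lie_iso f f' \<longleftrightarrow> (\<exists>\<phi>. lie_hom f f' \<phi> \<and> bij \<phi>)"
  unfolding lie_iso_def lie_hom_def by blast

lemma lie_hom_comp: "lie_hom f f' \<phi> \<Longrightarrow> lie_hom f' f'' \<psi> \<Longrightarrow> lie_hom f f'' (\<psi> \<circ> \<phi>)"
  by (simp add: lie_hom_def linear_compose)

lemma lie_hom_inv: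
  assumes "lie_hom f f' \<phi>" and "bij \<phi>"
  shows "lie_hom f' f (inv \<phi>)"
proof -
  have "\<phi> (inv \<phi> (brG f' x y)) = \<phi> (brG f (inv \<phi> x) (inv \<phi> y))" for x y
    using assms by (simp add: lie_hom_def bij_is_surj surj_f_inv_f)
  then show ?thesis
    using assms by (simp add: lie_hom_def bij_is_inj inj_eq inj_linear_imp_inv_linear)
qed

lemma lie_hom_transport:
  fixes D :: "real^3 \<Rightarrow> real^3"
  assumes "linear D" and "inj D"
  shows "\<exists>g'. lie_hom g g' D"
proof -
  define E where "E = inv D"
  have "linear E" unfolding E_def using assms by (rule inj_linear_imp_inv_linear)
  define B where "B x y = D (brG g (E x) (E y))" for x y
  have "bilinear B"
    using bilinear_brG[of g] \<open>linear E\<close> \<open>linear D\<close>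
    unfolding bilinear_def B_def
    by (auto intro!: linear_compose[of E, unfolded o_def] linear_compose[of _ D, unfolded o_def])
  then have "brG (\<lambda>i j k. B (axis i 1) (axis j 1) $ k) = B"
    by (rule brG_eqI) simp
  then have "lie_hom g (\<lambda>i j k. B (axis i 1) (axis j 1) $ k) D"
    using assms by (simp add: lie_hom_def B_def E_def)
  then show ?thesis by blast
qed

lemma lie_hom_target_unique:
  assumes "lie_hom g g1 D" and "lie_hom g g2 D" and "surj D"
  shows "g1 = g2"
proof (rule brG_inject)
  have "brG g1 (D x) (D y) = brG g2 (D x) (D y)" for x y
    using assms(1,2) by (simp add: lie_hom_def)
  then show "brG g1 = brG g2"
    using \<open>surj D\<close> by (metis surjD ext)
qed

section \<open>Isomorphisms of Manin triples\<close>

lemma inj_of_pairing: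
  fixes C D :: "real^3 \<Rightarrow> real^3"
  assumes "\<forall>x y. C x \<bullet> D y = x \<bullet> y"
  shows "inj C" and "inj D"
  using assms by (auto intro!: injI) (metis vector_eq_rdot, metis vector_eq_ldot)

lemma bij_of_pairing:
  fixes C D :: "real^3 \<Rightarrow> real^3"
  assumes "linear C" and "linear D" and "\<forall>x y. C x \<bullet> D y = x \<bullet> y"
  shows "bij C" and "bij D"
  using assms inj_of_pairing[OF assms(3)] by (simp_all add: bij_def linear_injective_imp_surjective)

lemma pairing_unique:
  fixes C D D' :: "real^3 \<Rightarrow> real^3"
  assumes "\<forall>x y. C x \<bullet> D y = x \<bullet> y" and "\<forall>x y. C x \<bullet> D' y = x \<bullet> y" and "surj C"
  shows "D = D'"
proof
  fix y
  have "z \<bullet> D y = z \<bullet> D' y" for z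
    using assms by (metis surjD)
  then show "D y = D' y" using vector_eq_ldot by blast
qed

lemma pairing_eqI:
  fixes C D :: "real^3 \<Rightarrow> real^3"
  assumes "\<forall>x y. C x \<bullet> D y = x \<bullet> y" and "surj D" and "\<And>z. b \<bullet> D z = a \<bullet> z"
  shows "C a = b"
proof -
  have "C a \<bullet> w = b \<bullet> w" for w
    using assms by (metis surjD)
  then show ?thesis using vector_eq_rdot by blast
qed

lemma dbr_map_prod:
  fixes C D :: "real^3 \<Rightarrow> real^3"
  assumes "lie_hom f f' C" and "lie_hom g g' D" and pairing: "\<forall>x y. C x \<bullet> D y = x \<bullet> y"
    and "surj C" and "surj D"
  shows "map_prod C D (dbr f g u v) = dbr f' g' (map_prod C D u) (map_prod C D v)"
proof -
  have homC: "brG f' (C x) (C y) = C (brG f x y)" and homD: "brG g' (D x) (D y) = D (brG g x y)" for x y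
    using assms(1,2) by (simp_all add: lie_hom_def)
  have pairing': "\<forall>x y. D x \<bullet> C y = x \<bullet> y"
    using pairing by (simp add: inner_commute)
  obtain x xi y eta where uv: "u = (x, xi)" "v = (y, eta)"
    by fastforce
  have "C (fst (dbr f g u v)) = fst (dbr f' g' (C x, D xi) (C y, D eta))"
    by (rule pairing_eqI[OF pairing \<open>surj D\<close>]) (simp add: uv inner_fst_dbr homC homD pairing)
  moreover have "D (snd (dbr f g u v)) = snd (dbr f' g' (C x, D xi) (C y, D eta))"
    by (rule pairing_eqI[OF pairing' \<open>surj C\<close>]) (simp add: uv inner_snd_dbr homC homD pairing')
  ultimately show ?thesis
    by (simp add: uv map_prod_def split_beta)
qed

text \<open>
  The pairing condition says that \<open>D\<close> is the inverse transpose of \<open>C\<close>: in the notation of the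
  paper, \<open>X'_i = X_k A^k_i\<close> and \<open>X~'^j = (A^-1)^j_k X~^k\<close>.
\<close>

lemma manin_iso_of_dual_homs:
  fixes C D :: "real^3 \<Rightarrow> real^3"
  assumes C: "lie_hom f f' C" and D: "lie_hom g g' D"
    and pairing: "\<forall>x y. C x \<bullet> D y = x \<bullet> y"
  shows "manin_iso f g f' g'"
proof -
  have "linear C" "linear D"
    using C D by (simp_all add: lie_hom_def)
  have pairing': "\<forall>x y. D x \<bullet> C y = x \<bullet> y"
    using pairing by (simp add: inner_commute)
  have "bij C" "bij D"
    using bij_of_pairing[OF \<open>linear C\<close> \<open>linear D\<close> pairing] by auto
  define P where "P = map_prod C D"
  have "linear P"
    using \<open>linear C\<close> \<open>linear D\<close>
    by (intro linearI) (simp_all add: P_def map_prod_def split_beta linear_add linear_scale)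
  have "bij P"
    using \<open>bij C\<close> \<open>bij D\<close> map_prod_inj_on[of C UNIV D UNIV] map_prod_surj[of C D]
    by (simp add: P_def bij_def)
  have "P (dbr f g u v) = dbr f' g' (P u) (P v)" for u v
    unfolding P_def using C D pairing \<open>bij C\<close> \<open>bij D\<close> by (intro dbr_map_prod) (simp_all add: bij_is_surj)
  moreover have "dform (P u) (P v) = dform u v" for u v
    using pairing pairing' by (simp add: P_def dform_def map_prod_def split_beta)
  moreover have "P ` Gpart = Gpart" "P ` Gtpart = Gtpart"
  proof -
    have parts: "Gpart = UNIV \<times> {0}" "Gtpart = {0} \<times> UNIV"
      by (auto simp: Gpart_def Gtpart_def)
    show "P ` Gpart = Gpart" "P ` Gtpart = Gtpart"
      unfolding parts P_def
      using \<open>bij C\<close> \<open>bij D\<close> linear_0[OF \<open>linear C\<close>] linear_0[OF \<open>linear D\<close>]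
      by (intro map_prod_surj_on; simp add: bij_is_surj)+
  qed
  ultimately show ?thesis
    unfolding manin_iso_def using \<open>linear P\<close> \<open>bij P\<close> by blast
qed

lemma dual_homs_of_manin_iso:
  assumes "manin_iso f g f' g'"
  obtains C D where "lie_hom f f' C" and "lie_hom g g' D" and "\<forall>x y. C x \<bullet> D y = x \<bullet> y"
proof -
  obtain P where "linear P"
    and br: "\<forall>u v. P (dbr f g u v) = dbr f' g' (P u) (P v)"
    and fm: "\<forall>u v. dform (P u) (P v) = dform u v"
    and "P ` Gpart = Gpart" "P ` Gtpart = Gtpart"
    using assms unfolding manin_iso_def by blast
  have "snd (P (x, 0)) = 0" "fst (P (0, y)) = 0" for x y
  proof -
    have "P (x, 0) \<in> Gpart" "P (0, y) \<in> Gtpart"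
      using \<open>P ` Gpart = Gpart\<close> \<open>P ` Gtpart = Gtpart\<close> by (auto simp: Gpart_def Gtpart_def)
    then show "snd (P (x, 0)) = 0" "fst (P (0, y)) = 0"
      by (auto simp: Gpart_def Gtpart_def)
  qed
  define C where "C x = fst (P (x, 0))" for x
  define D where "D y = snd (P (0, y))" for y
  have P_split: "P (x, y) = (C x, D y)" for x y
    using linear_add[OF \<open>linear P\<close>, of "(x, 0)" "(0, y)"] \<open>snd (P (x, 0)) = 0\<close> \<open>fst (P (0, y)) = 0\<close>
    by (simp add: C_def D_def prod_eq_iff)
  have "(C (x + x'), D (y + y')) = (C x + C x', D y + D y')" for x x' y y'
    using linear_add[OF \<open>linear P\<close>, of "(x, y)" "(x', y')"] by (simp add: P_split)
  moreover have "(C (t *\<^sub>R x), D (t *\<^sub>R y)) = (t *\<^sub>R C x, t *\<^sub>R D y)" for t x y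
    using linear_scale[OF \<open>linear P\<close>, of t "(x, y)"] by (simp add: P_split)
  ultimately have "linear C" "linear D"
    by (auto intro!: linearI)
  then have "C 0 = 0" "D 0 = 0"
    by (simp_all add: linear_0)
  have "C (brG f x y) = brG f' (C x) (C y)" "D (brG g x y) = brG g' (D x) (D y)" for x y
    using br[rule_format, of "(x, 0)" "(y, 0)"] br[rule_format, of "(0, x)" "(0, y)"]
    by (simp_all add: P_split dbr_Gpart dbr_Gtpart \<open>C 0 = 0\<close> \<open>D 0 = 0\<close>)
  moreover have "C x \<bullet> D y = x \<bullet> y" for x y
    using fm[rule_format, of "(x, 0)" "(0, y)"] by (simp add: P_split dform_def \<open>C 0 = 0\<close> \<open>D 0 = 0\<close>)
  ultimately show ?thesis
    using that \<open>linear C\<close> \<open>linear D\<close> by (metis lie_hom_def)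
qed

lemma manin_iso_trans:
  assumes "manin_iso f1 g1 f2 g2" and "manin_iso f2 g2 f3 g3"
  shows "manin_iso f1 g1 f3 g3"
proof -
  obtain C1 D1 C2 D2 where "lie_hom f1 f2 C1" "lie_hom g1 g2 D1" "\<forall>x y. C1 x \<bullet> D1 y = x \<bullet> y"
    and "lie_hom f2 f3 C2" "lie_hom g2 g3 D2" "\<forall>x y. C2 x \<bullet> D2 y = x \<bullet> y"
    using assms by (meson dual_homs_of_manin_iso)
  then show ?thesis
    by (intro manin_iso_of_dual_homs[of _ _ "C2 \<circ> C1" _ _ "D2 \<circ> D1"]) (simp_all add: lie_hom_comp)
qed

lemma manin_iso_sym:
  assumes "manin_iso f g f' g'"
  shows "manin_iso f' g' f g"
proof -
  obtain C D where C: "lie_hom f f' C" and D: "lie_hom g g' D"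
    and pairing: "\<forall>x y. C x \<bullet> D y = x \<bullet> y"
    using assms by (rule dual_homs_of_manin_iso)
  then have "bij C" "bij D"
    using bij_of_pairing by (auto simp: lie_hom_def)
  then have "inv C x \<bullet> inv D y = x \<bullet> y" for x y
    using pairing by (metis bij_inv_eq_iff)
  then show ?thesis
    using C D \<open>bij C\<close> \<open>bij D\<close> by (intro manin_iso_of_dual_homs[of _ _ "inv C" _ _ "inv D"]) (simp_all add: lie_hom_inv)
qed

lemma manin_iso_preserves_manin_triple:
  assumes "manin_iso f g f' g'" and "manin_triple f g"
  shows "manin_triple f' g'"
proof -
  obtain P where "linear P" "bij P"
    and br: "\<And>u v. dbr f' g' (P u) (P v) = P (dbr f g u v)"
    and fm: "\<And>u v. dform (P u) (P v) = dform u v"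
    using assms(1) unfolding manin_iso_def by metis
  have onto: "\<exists>u. u' = P u" for u'
    using \<open>bij P\<close> by (metis bij_def surjD)
  have P_add: "P u + P v = P (u + v)" for u v
    using \<open>linear P\<close> by (simp add: linear_add)
  have "dbr f' g' (P u) (P u) = 0" for u
    using assms(2) linear_0[OF \<open>linear P\<close>] by (simp add: br manin_triple_def del: split_paired_All)
  moreover have "dbr f' g' (P u) (dbr f' g' (P v) (P w)) + dbr f' g' (P v) (dbr f' g' (P w) (P u))
      + dbr f' g' (P w) (dbr f' g' (P u) (P v)) = 0" for u v w
    using assms(2) linear_0[OF \<open>linear P\<close>] by (simp add: br P_add manin_triple_def del: split_paired_All)
  moreover have "dform (dbr f' g' (P u) (P v)) (P w) = dform (P u) (dbr f' g' (P v) (P w))" for u v w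
    using assms(2) by (simp add: br fm manin_triple_def del: split_paired_All)
  ultimately show ?thesis
    unfolding manin_triple_def by (metis onto)
qed

lemma manin_iso_of_lie_iso:
  assumes "lie_iso f f'"
  obtains g' where "manin_iso f g f' g'"
proof -
  obtain \<phi> where \<phi>: "lie_hom f f' \<phi>" and "bij \<phi>"
    using assms lie_iso_iff_lie_hom by blast
  then have "linear (inv \<phi>)"
    by (simp add: lie_hom_def bij_is_inj inj_linear_imp_inv_linear)
  define D where "D = adjoint (inv \<phi>)"
  have pairing: "\<forall>x y. \<phi> x \<bullet> D y = x \<bullet> y"
    using \<open>bij \<phi>\<close> adjoint_works[OF \<open>linear (inv \<phi>)\<close>] by (simp add: D_def bij_is_inj)
  moreover have "linear D"
    unfolding D_def using \<open>linear (inv \<phi>)\<close> by (rule adjoint_linear)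
  then obtain g' where "lie_hom g g' D"
    using lie_hom_transport inj_of_pairing(2)[OF pairing] by blast
  ultimately show ?thesis
    using \<phi> that manin_iso_of_dual_homs by blast
qed

section \<open>Manin triples with first algebra \<open>VII\<^sub>0\<close>\<close>

lemma antisym_of_alternating:
  assumes "\<forall>x. brG g x x = 0"
  shows "g j i k = - g i j k"
proof -
  have "brG g (axis i 1) (axis j 1) + brG g (axis j 1) (axis i 1) = 0"
    using assms[rule_format, of "axis i 1 + axis j 1"] assms
    by (simp add: bilinear_ladd[OF bilinear_brG] bilinear_radd[OF bilinear_brG] add.commute)
  then show ?thesis
    by (simp add: brG_axis vec_eq_iff add_eq_0_iff)
qed

lemma alternating_of_manin_triple: "manin_triple f g \<Longrightarrow> brG g x x = 0"
  unfolding manin_triple_def by (metis dbr_Gtpart snd_conv snd_zero)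

lemma brG_VII0: "brG f_VII0 x y = vector [x$2 * y$3 - x$3 * y$2, x$3 * y$1 - x$1 * y$3, 0]"
  by (simp add: brG_def vec_eq_iff forall_3 f_VII0_def sc_of_def sum_3)

definition dual_VII0 :: "real \<Rightarrow> real \<Rightarrow> real \<Rightarrow> real \<Rightarrow> sc" where
  "dual_VII0 p q r s = sc_of (vector [-q, -r, s]) (vector [0, p, q]) (vector [-p, 0, r])"

lemmas VII0_coordinates =
  dbr_def sum_3 vec_eq_iff forall_3 axis_def f_VII0_def sc_of_def Let_def prod_eq_iff

lemma manin_triple_VII0_imp_dual_VII0:
  assumes "manin_triple f_VII0 g"
  obtains p q r s where "g = dual_VII0 p q r s" and "p * s = 0"
proof -
  let ?d = "dbr f_VII0 g"
  have jacobi: "?d u (?d v w) + ?d v (?d w u) + ?d w (?d u v) = 0" for u v w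
    using assms unfolding manin_triple_def by blast
  have antisym: "g j i k = - g i j k" for i j k
    by (rule antisym_of_alternating) (simp add: alternating_of_manin_triple[OF assms])
  have diag: "g i i k = 0" for i k
    using antisym[of i i k] by simp
  note g_simps = diag antisym[of 2 1] antisym[of 1 3] antisym[of 3 2]
  have "g 2 3 1 + g 3 1 2 = 0"
    using jacobi[of "(axis 1 1, 0)" "(axis 2 1, 0)" "(0, axis 1 1)"] by (simp add: g_simps VII0_coordinates)
  moreover have "g 2 3 1 - g 3 1 2 = 0 \<and> g 1 2 2 + g 3 1 3 = 0"
    using jacobi[of "(axis 1 1, 0)" "(axis 3 1, 0)" "(0, axis 1 1)"] by (simp add: g_simps VII0_coordinates)
  moreover have "g 3 1 1 + g 2 3 2 = 0"
    using jacobi[of "(axis 1 1, 0)" "(axis 3 1, 0)" "(0, axis 2 1)"] by (simp add: g_simps VII0_coordinates)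
  moreover have "g 1 2 1 + g 2 3 3 = 0"
    using jacobi[of "(axis 2 1, 0)" "(axis 3 1, 0)" "(0, axis 1 1)"] by (simp add: g_simps VII0_coordinates)
  ultimately have linear_rels: "g 3 1 1 = - g 2 3 2" "g 1 2 2 = - g 3 1 3" "g 1 2 1 = - g 2 3 3"
      "g 2 3 1 = 0" "g 3 1 2 = 0"
    by linarith+
  have "g 1 2 2 * g 2 3 3 + (g 1 2 3 * g 3 1 1 - g 1 2 3 * g 2 3 2 - g 1 2 1 * g 3 1 3) = 0"
    using jacobi[of "(axis 3 1, 0)" "(0, axis 1 1)" "(0, axis 2 1)"]
    by (simp add: g_simps VII0_coordinates)
  then have "g 2 3 2 * g 1 2 3 = 0"
    unfolding linear_rels by (simp add: algebra_simps)
  moreover have "g = dual_VII0 (g 2 3 2) (g 2 3 3) (g 3 1 3) (g 1 2 3)"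
    unfolding fun_eq_iff forall_3 by (simp add: dual_VII0_def sc_of_def g_simps linear_rels)
  ultimately show ?thesis
    using that by blast
qed

lemma manin_triple_dual_VII0:
  assumes "p * s = 0"
  shows "manin_triple f_VII0 (dual_VII0 p q r s)"
proof -
  let ?d = "dbr f_VII0 (dual_VII0 p q r s)"
  have "?d u u = 0" for u
    by (cases u) (simp add: dual_VII0_def VII0_coordinates algebra_simps)
  moreover have "?d (x, xi) (?d (y, eta) (z, zeta)) + ?d (y, eta) (?d (z, zeta) (x, xi))
      + ?d (z, zeta) (?d (x, xi) (y, eta)) = 0" for x xi y eta z zeta
    using assms by (simp add: dual_VII0_def VII0_coordinates) algebra
  moreover have "dform (?d (x, xi) (y, eta)) (z, zeta) = dform (x, xi) (?d (y, eta) (z, zeta))"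
    for x xi y eta z zeta
    by (simp add: dform_def inner_vec_def dual_VII0_def VII0_coordinates) algebra
  ultimately show ?thesis
    unfolding manin_triple_def by simp
qed

section \<open>Automorphisms of \<open>VII\<^sub>0\<close> and normal forms\<close>

definition aut_VII0 :: "real \<Rightarrow> real \<Rightarrow> real \<Rightarrow> real \<Rightarrow> real \<Rightarrow> real^3 \<Rightarrow> real^3" where
  "aut_VII0 a b \<sigma> u v x =
     vector [a * x$1 - \<sigma> * b * x$2 + u * x$3, b * x$1 + \<sigma> * a * x$2 + v * x$3, \<sigma> * x$3]"

text \<open>For \<open>(c, d) = (a, b) / (a\<^sup>2 + b\<^sup>2)\<close> this is the inverse transpose of \<open>aut_VII0 a b \<sigma> u v\<close>.\<close>

definition aut_VII0_dual :: "real \<Rightarrow> real \<Rightarrow> real \<Rightarrow> real \<Rightarrow> real \<Rightarrow> real^3 \<Rightarrow> real^3" where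
  "aut_VII0_dual c d \<sigma> u v y =
     vector [c * y$1 - \<sigma> * d * y$2, d * y$1 + \<sigma> * c * y$2,
       - \<sigma> * (u * (c * y$1 - \<sigma> * d * y$2) + v * (d * y$1 + \<sigma> * c * y$2)) + \<sigma> * y$3]"

lemma lie_hom_aut_VII0:
  assumes "\<sigma> * \<sigma> = 1"
  shows "lie_hom f_VII0 f_VII0 (aut_VII0 a b \<sigma> u v)"
  unfolding lie_hom_def
proof
  show "linear (aut_VII0 a b \<sigma> u v)"
    by (rule linearI) (simp_all add: aut_VII0_def vec_eq_iff forall_3 algebra_simps)
  show "\<forall>x y. aut_VII0 a b \<sigma> u v (brG f_VII0 x y) =
      brG f_VII0 (aut_VII0 a b \<sigma> u v x) (aut_VII0 a b \<sigma> u v y)"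
    using assms by (simp add: aut_VII0_def brG_VII0 vec_eq_iff forall_3) algebra
qed

lemma inner_aut_VII0_dual:
  assumes "\<sigma> * \<sigma> = 1" and "a * c + b * d = 1" and "b * c - a * d = 0"
  shows "aut_VII0 a b \<sigma> u v x \<bullet> aut_VII0_dual c d \<sigma> u v y = x \<bullet> y"
  using assms unfolding aut_VII0_def aut_VII0_dual_def inner_vec_def sum_3 by simp algebra

lemma lie_hom_aut_VII0_dual:
  assumes "\<sigma> * \<sigma> = 1" and "a * c + b * d = 1" and "b * c - a * d = 0"
  shows "lie_hom (dual_VII0 p q r s)
     (dual_VII0 (\<sigma> * p) (\<sigma> * a * q - b * r - v * p) (a * r + \<sigma> * b * q + u * p) ((a\<^sup>2 + b\<^sup>2) * s))
     (aut_VII0_dual c d \<sigma> u v)"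
  unfolding lie_hom_def
proof
  show "linear (aut_VII0_dual c d \<sigma> u v)"
    by (rule linearI) (simp_all add: aut_VII0_dual_def vec_eq_iff forall_3 algebra_simps)
  show "\<forall>x y. aut_VII0_dual c d \<sigma> u v (brG (dual_VII0 p q r s) x y) =
      brG (dual_VII0 (\<sigma> * p) (\<sigma> * a * q - b * r - v * p) (a * r + \<sigma> * b * q + u * p) ((a\<^sup>2 + b\<^sup>2) * s))
        (aut_VII0_dual c d \<sigma> u v x) (aut_VII0_dual c d \<sigma> u v y)"
    using assms
    by (simp add: aut_VII0_dual_def brG_def dual_VII0_def sc_of_def vec_eq_iff forall_3 sum_3) algebra
qed

lemma aut_VII0_of_lie_hom:
  assumes "lie_hom f_VII0 f_VII0 C" and "inj C"
  obtains a b \<sigma> u v where "\<sigma> * \<sigma> = 1" and "a\<^sup>2 + b\<^sup>2 > 0" and "C = aut_VII0 a b \<sigma> u v"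
proof -
  have "linear C" and hom: "C (brG f_VII0 x y) = brG f_VII0 (C x) (C y)" for x y
    using assms(1) by (simp_all add: lie_hom_def)
  define c where "c i j = C (axis j 1) $ i" for i j
  have "brG f_VII0 (axis 2 1) (axis 3 1) = axis 1 1" "brG f_VII0 (axis 3 1) (axis 1 1) = axis 2 1"
    by (simp_all add: brG_VII0 axis_def vec_eq_iff forall_3)
  then have e1: "C (axis 1 1) = brG f_VII0 (C (axis 2 1)) (C (axis 3 1))"
    and e2: "C (axis 2 1) = brG f_VII0 (C (axis 3 1)) (C (axis 1 1))"
    by (metis hom)+
  have col1: "c 1 1 = c 2 2 * c 3 3 - c 3 2 * c 2 3" "c 2 1 = c 3 2 * c 1 3 - c 1 2 * c 3 3" "c 3 1 = 0"
    using e1 by (simp_all add: c_def brG_VII0 vec_eq_iff forall_3 algebra_simps)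
  have col2: "c 1 2 = c 2 3 * c 3 1 - c 3 3 * c 2 1" "c 2 2 = c 3 3 * c 1 1 - c 1 3 * c 3 1" "c 3 2 = 0"
    using e2 by (simp_all add: c_def brG_VII0 vec_eq_iff forall_3 algebra_simps)
  have "C (axis 1 1) \<noteq> 0"
    using assms(2) linear_0[OF \<open>linear C\<close>] by (metis axis_eq_0_iff injD zero_neq_one)
  then have "c 1 1 \<noteq> 0 \<or> c 2 1 \<noteq> 0"
    using \<open>c 3 1 = 0\<close> by (auto simp: c_def vec_eq_iff forall_3)
  moreover have "c 1 1 = (c 3 3 * c 3 3) * c 1 1" "c 2 1 = (c 3 3 * c 3 3) * c 2 1"
    using col1 col2 by (simp_all add: algebra_simps)
  ultimately have "c 3 3 * c 3 3 = 1"
    by auto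
  moreover have "(c 1 1)\<^sup>2 + (c 2 1)\<^sup>2 > 0"
    using \<open>c 1 1 \<noteq> 0 \<or> c 2 1 \<noteq> 0\<close> by (auto simp: sum_power2_gt_zero_iff)
  moreover have "C x = aut_VII0 (c 1 1) (c 2 1) (c 3 3) (c 1 3) (c 2 3) x" for x
  proof -
    have "c 1 2 = - c 3 3 * c 2 1" "c 2 2 = c 3 3 * c 1 1" "c 3 1 = 0" "c 3 2 = 0"
      using col1(3) col2 by simp_all
    then show ?thesis
      using linear_expansion_3[OF \<open>linear C\<close>, of x]
      by (simp add: aut_VII0_def c_def vec_eq_iff forall_3 algebra_simps)
  qed
  ultimately show ?thesis
    using that by (metis ext)
qed

lemma dual_VII0_eq_iff:
  "dual_VII0 p q r s = dual_VII0 p' q' r' s' \<longleftrightarrow> p = p' \<and> q = q' \<and> r = r' \<and> s = s'"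
proof
  assume "dual_VII0 p q r s = dual_VII0 p' q' r' s'"
  then have "dual_VII0 p q r s i j k = dual_VII0 p' q' r' s' i j k" for i j k
    by simp
  from this[of 2 3 2] this[of 2 3 3] this[of 3 1 3] this[of 1 2 3]
  show "p = p' \<and> q = q' \<and> r = r' \<and> s = s'"
    by (simp add: dual_VII0_def sc_of_def)
qed simp

lemma div_sum_squares_rels:
  fixes a b :: real
  assumes "a\<^sup>2 + b\<^sup>2 > 0"
  shows "a * (a / (a\<^sup>2 + b\<^sup>2)) + b * (b / (a\<^sup>2 + b\<^sup>2)) = 1"
    and "b * (a / (a\<^sup>2 + b\<^sup>2)) - a * (b / (a\<^sup>2 + b\<^sup>2)) = 0"
proof -
  have "a * (a / (a\<^sup>2 + b\<^sup>2)) + b * (b / (a\<^sup>2 + b\<^sup>2)) = (a\<^sup>2 + b\<^sup>2) / (a\<^sup>2 + b\<^sup>2)"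
    by (simp only: times_divide_eq_right add_divide_distrib power2_eq_square)
  also have "\<dots> = 1"
    using assms by (intro divide_self) linarith
  finally show "a * (a / (a\<^sup>2 + b\<^sup>2)) + b * (b / (a\<^sup>2 + b\<^sup>2)) = 1" .
qed simp

lemma manin_iso_dual_VII0_aut:
  assumes "\<sigma> * \<sigma> = 1" and "a\<^sup>2 + b\<^sup>2 > 0"
  shows "manin_iso f_VII0 (dual_VII0 p q r s) f_VII0
    (dual_VII0 (\<sigma> * p) (\<sigma> * a * q - b * r - v * p) (a * r + \<sigma> * b * q + u * p) ((a\<^sup>2 + b\<^sup>2) * s))"
proof -
  define c d where "c = a / (a\<^sup>2 + b\<^sup>2)" and "d = b / (a\<^sup>2 + b\<^sup>2)"
  have rels: "a * c + b * d = 1" "b * c - a * d = 0"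
    unfolding c_def d_def using assms(2) by (rule div_sum_squares_rels)+
  show ?thesis
    using inner_aut_VII0_dual[OF assms(1) rels]
    by (intro manin_iso_of_dual_homs[OF lie_hom_aut_VII0[OF assms(1)] lie_hom_aut_VII0_dual[OF assms(1) rels]])
      blast
qed

lemma manin_iso_dual_VII0_iff:
  "manin_iso f_VII0 (dual_VII0 p q r s) f_VII0 (dual_VII0 p' q' r' s') \<longleftrightarrow>
    (\<exists>a b \<sigma> u v. \<sigma> * \<sigma> = 1 \<and> a\<^sup>2 + b\<^sup>2 > 0 \<and> p' = \<sigma> * p \<and>
       q' = \<sigma> * a * q - b * r - v * p \<and> r' = a * r + \<sigma> * b * q + u * p \<and> s' = (a\<^sup>2 + b\<^sup>2) * s)"
  (is "?iso \<longleftrightarrow> (\<exists>a b \<sigma> u v. ?orbit a b \<sigma> u v)")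
proof
  assume ?iso
  then obtain C D where C: "lie_hom f_VII0 f_VII0 C"
    and D: "lie_hom (dual_VII0 p q r s) (dual_VII0 p' q' r' s') D"
    and pairing: "\<forall>x y. C x \<bullet> D y = x \<bullet> y"
    by (rule dual_homs_of_manin_iso)
  then have "bij C" "bij D"
    using bij_of_pairing by (auto simp: lie_hom_def)
  then obtain a b \<sigma> u v where "\<sigma> * \<sigma> = 1" and "a\<^sup>2 + b\<^sup>2 > 0" and C_eq: "C = aut_VII0 a b \<sigma> u v"
    using C aut_VII0_of_lie_hom bij_is_inj by metis
  define c d where "c = a / (a\<^sup>2 + b\<^sup>2)" and "d = b / (a\<^sup>2 + b\<^sup>2)"
  have rels: "a * c + b * d = 1" "b * c - a * d = 0"
    unfolding c_def d_def using \<open>a\<^sup>2 + b\<^sup>2 > 0\<close> by (rule div_sum_squares_rels)+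
  have D_eq: "D = aut_VII0_dual c d \<sigma> u v"
    using pairing inner_aut_VII0_dual[OF \<open>\<sigma> * \<sigma> = 1\<close> rels] \<open>bij C\<close>
    by (intro pairing_unique[of C]) (simp_all add: C_eq bij_is_surj)
  have "dual_VII0 p' q' r' s' =
      dual_VII0 (\<sigma> * p) (\<sigma> * a * q - b * r - v * p) (a * r + \<sigma> * b * q + u * p) ((a\<^sup>2 + b\<^sup>2) * s)"
    using lie_hom_target_unique[OF D[unfolded D_eq] lie_hom_aut_VII0_dual[OF \<open>\<sigma> * \<sigma> = 1\<close> rels]]
      bij_is_surj[OF \<open>bij D\<close>] D_eq by blast
  then have "?orbit a b \<sigma> u v"
    using \<open>\<sigma> * \<sigma> = 1\<close> \<open>a\<^sup>2 + b\<^sup>2 > 0\<close> by (simp add: dual_VII0_eq_iff)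
  then show "\<exists>a b \<sigma> u v. ?orbit a b \<sigma> u v"
    by blast
next
  assume "\<exists>a b \<sigma> u v. ?orbit a b \<sigma> u v"
  then show ?iso
    by (auto simp: manin_iso_dual_VII0_aut)
qed

lemma dual_sc_eq_dual_VII0:
  "dual_sc l b = dual_VII0 (if l = BV_ii then b else 0) 0
     (case l of BIV \<Rightarrow> b | BV_i \<Rightarrow> 1 | _ \<Rightarrow> 0)
     (case l of BII_i \<Rightarrow> 1 | BII_ii \<Rightarrow> -1 | BIV \<Rightarrow> b | _ \<Rightarrow> 0)"
  unfolding fun_eq_iff forall_3 by (cases l) (simp_all add: dual_VII0_def sc_of_def)

lemma ex_dual_sc_manin_iso:
  assumes "p * s = 0"
  shows "\<exists>l \<beta>. valid_param l \<beta> \<and> manin_iso f_VII0 (dual_VII0 p q r s) f_VII0 (dual_sc l \<beta>)"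
proof -
  have reach: ?thesis
    if "valid_param l \<beta>" and "\<sigma> * \<sigma> = 1" and "a\<^sup>2 + b\<^sup>2 > 0"
      and "(if l = BV_ii then \<beta> else 0) = \<sigma> * p"
      and "0 = \<sigma> * a * q - b * r - v * p"
      and "(case l of BIV \<Rightarrow> \<beta> | BV_i \<Rightarrow> 1 | _ \<Rightarrow> 0) = a * r + \<sigma> * b * q + u * p"
      and "(case l of BII_i \<Rightarrow> 1 | BII_ii \<Rightarrow> -1 | BIV \<Rightarrow> \<beta> | _ \<Rightarrow> 0) = (a\<^sup>2 + b\<^sup>2) * s"
    for l \<beta> \<sigma> a b u v
    unfolding dual_sc_eq_dual_VII0 manin_iso_dual_VII0_iff using that by blast
  consider (V_ii) "p \<noteq> 0" "s = 0"
    | (I) "p = 0" "q = 0" "r = 0" "s = 0"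
    | (II_i) "p = 0" "q = 0" "r = 0" "s > 0"
    | (II_ii) "p = 0" "q = 0" "r = 0" "s < 0"
    | (V_i) "p = 0" "q\<^sup>2 + r\<^sup>2 > 0" "s = 0"
    | (IV) "p = 0" "q\<^sup>2 + r\<^sup>2 > 0" "s \<noteq> 0"
    using assms by (fastforce simp: sum_power2_gt_zero_iff)
  then show ?thesis
  proof cases
    case V_ii
    then show ?thesis
      by (intro reach[where l = BV_ii and \<beta> = "\<bar>p\<bar>" and \<sigma> = "sgn p" and a = 1 and b = 0
        and u = "- r / p" and v = "sgn p * q / p"]) (auto simp: abs_sgn zero_less_mult_iff)
  next
    case I
    then show ?thesis
      by (intro reach[where l = BI and \<beta> = 0 and \<sigma> = 1 and a = 1 and b = 0 and u = 0 and v = 0]) simp_all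
  next
    case II_i
    then show ?thesis
      by (intro reach[where l = BII_i and \<beta> = 0 and \<sigma> = 1 and a = "1 / sqrt s" and b = 0
        and u = 0 and v = 0]) (simp_all add: power_divide)
  next
    case II_ii
    then show ?thesis
      by (intro reach[where l = BII_ii and \<beta> = 0 and \<sigma> = 1 and a = "1 / sqrt (- s)" and b = 0
        and u = 0 and v = 0]) (simp_all add: power_divide)
  next
    case V_i
    define M where "M = q\<^sup>2 + r\<^sup>2"
    have "r * r + q * q = M" "M > 0"
      using V_i by (simp_all add: M_def power2_eq_square)
    with V_i show ?thesis
      by (intro reach[where l = BV_i and \<beta> = 0 and \<sigma> = 1 and a = "r / M" and b = "q / M"
        and u = 0 and v = 0]) (auto simp: field_simps power2_eq_square)
  next
    case IV
    define M where "M = q\<^sup>2 + r\<^sup>2"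
    have "r * r + q * q = M" "M > 0"
      using IV by (simp_all add: M_def power2_eq_square)
    with IV show ?thesis
      by (intro reach[where l = BIV and \<beta> = "M / s" and \<sigma> = 1 and a = "r / s" and b = "q / s"
        and u = 0 and v = 0]) (auto simp: field_simps power2_eq_square zero_less_divide_iff zero_less_mult_iff)
  qed
qed

lemma dual_sc_manin_iso_unique:
  assumes "valid_param l1 b1" and "valid_param l2 b2"
    and "manin_iso f_VII0 (dual_sc l1 b1) f_VII0 (dual_sc l2 b2)"
  shows "l1 = l2 \<and> b1 = b2"
proof -
  obtain a b \<sigma> u v where "\<sigma> * \<sigma> = 1" and "a\<^sup>2 + b\<^sup>2 > 0"
    and hp: "(if l2 = BV_ii then b2 else 0) = \<sigma> * (if l1 = BV_ii then b1 else 0)"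
    and hq: "0 = \<sigma> * a * 0 - b * (case l1 of BIV \<Rightarrow> b1 | BV_i \<Rightarrow> 1 | _ \<Rightarrow> 0)
      - v * (if l1 = BV_ii then b1 else 0)"
    and hr: "(case l2 of BIV \<Rightarrow> b2 | BV_i \<Rightarrow> 1 | _ \<Rightarrow> 0) =
      a * (case l1 of BIV \<Rightarrow> b1 | BV_i \<Rightarrow> 1 | _ \<Rightarrow> 0) + \<sigma> * b * 0 + u * (if l1 = BV_ii then b1 else 0)"
    and hs: "(case l2 of BII_i \<Rightarrow> 1 | BII_ii \<Rightarrow> -1 | BIV \<Rightarrow> b2 | _ \<Rightarrow> 0) =
      (a\<^sup>2 + b\<^sup>2) * (case l1 of BII_i \<Rightarrow> 1 | BII_ii \<Rightarrow> -1 | BIV \<Rightarrow> b1 | _ \<Rightarrow> 0)"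
    using assms(3) unfolding dual_sc_eq_dual_VII0 manin_iso_dual_VII0_iff by blast
  show ?thesis
  proof (cases l1)
    case BIV
    then have "b = 0" "a \<noteq> 0"
      using hq assms(1) \<open>a\<^sup>2 + b\<^sup>2 > 0\<close> by auto
    show ?thesis
    proof (cases l2)
      case BIV
      with \<open>l1 = BIV\<close> have "b2 = a * b1" "b2 = a\<^sup>2 * b1"
        using hr hs \<open>b = 0\<close> by simp_all
      then have "a * b1 * (a - 1) = 0"
        by (simp add: algebra_simps power2_eq_square)
      then have "a = 1"
        using \<open>a \<noteq> 0\<close> assms(1) \<open>l1 = BIV\<close> by simp
      then show ?thesis
        using \<open>b2 = a * b1\<close> \<open>l1 = BIV\<close> BIV by simp
    qed (use \<open>l1 = BIV\<close> assms(1,2) hp hr hs \<open>a \<noteq> 0\<close> \<open>b = 0\<close> in auto)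
  next
    case BV_i
    then have "b = 0" "a \<noteq> 0"
      using hq \<open>a\<^sup>2 + b\<^sup>2 > 0\<close> by auto
    then show ?thesis
      using BV_i assms(1,2) hp hr hs by (cases l2) auto
  next
    case BV_ii
    moreover have "\<sigma> = 1 \<or> \<sigma> = -1"
      using \<open>\<sigma> * \<sigma> = 1\<close> by (simp add: square_eq_1_iff)
    ultimately show ?thesis
      using assms(1,2) hp by (cases l2) auto
  qed (use assms(1,2) hp hr hs \<open>a\<^sup>2 + b\<^sup>2 > 0\<close> in \<open>(cases l2; auto)+\<close>)
qed

theorem mainTheorem4:
  shows "(\<forall>l b. valid_param l b \<longrightarrow> manin_triple f_VII0 (dual_sc l b)) \<and>
         (\<forall>f ft. manin_triple f ft \<and> lie_iso f f_VII0 \<longrightarrow>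
            (\<exists>!(l, b). valid_param l b \<and> manin_iso f ft f_VII0 (dual_sc l b)))"
proof (intro conjI allI impI)
  fix l b
  assume "valid_param l b"
  then show "manin_triple f_VII0 (dual_sc l b)"
    by (cases l) (simp_all add: dual_sc_eq_dual_VII0 manin_triple_dual_VII0)
next
  fix f ft
  assume "manin_triple f ft \<and> lie_iso f f_VII0"
  then have "manin_triple f ft" and "lie_iso f f_VII0"
    by blast+
  from \<open>lie_iso f f_VII0\<close> obtain g where iso: "manin_iso f ft f_VII0 g"
    by (rule manin_iso_of_lie_iso)
  then have "manin_triple f_VII0 g"
    using \<open>manin_triple f ft\<close> by (rule manin_iso_preserves_manin_triple)
  from \<open>manin_triple f_VII0 g\<close> obtain p q r s where g: "g = dual_VII0 p q r s" and "p * s = 0"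
    by (rule manin_triple_VII0_imp_dual_VII0)
  then obtain l0 b0 where "valid_param l0 b0"
    and nf: "manin_iso f_VII0 (dual_VII0 p q r s) f_VII0 (dual_sc l0 b0)"
    using ex_dual_sc_manin_iso by blast
  have iso0: "manin_iso f ft f_VII0 (dual_sc l0 b0)"
    using manin_iso_trans[OF iso[unfolded g] nf] .
  have unique: "(l, b) = (l0, b0)"
    if "valid_param l b" and "manin_iso f ft f_VII0 (dual_sc l b)" for l b
    using dual_sc_manin_iso_unique[OF \<open>valid_param l0 b0\<close> that(1)
        manin_iso_trans[OF manin_iso_sym[OF iso0] that(2)]]
    by simp
  show "\<exists>!(l, b). valid_param l b \<and> manin_iso f ft f_VII0 (dual_sc l b)"
  proof (rule ex1I[of _ "(l0, b0)"])
    show "case (l0, b0) of (l, b) \<Rightarrow> valid_param l b \<and> manin_iso f ft f_VII0 (dual_sc l b)"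
      using \<open>valid_param l0 b0\<close> iso0 by simp
  qed (use unique in fastforce)
qed


end
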